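(* Let $n\ge2$, $q=2^m$, and let $\mathbf{H}_X^{(q)}$, $\mathbf{H}_Z^{(q)}$ be $q$-ary labelings of the toric Tanner graphs $\mathcal{G}_X$, $\mathcal{G}_Z$ (as defined in the context) with codes $\mathcal{C}_X^{(q)}$, $\mathcal{C}_Z^{(q)}$, such that $(\mathcal{C}_Z^{(q)})^\perp\subset\mathcal{C}_X^{(q)}$ and every cycle of the labeled graph $\mathcal{G}_X$ has product $1$. Then $$\min\{|x| : x\in\mathcal{C}_X^{(q)}\setminus(\mathcal{C}_Z^{(q)})^\perp\}=\min\{|x| : x\in\mathcal{C}_Z^{(q)}\setminus(\mathcal{C}_X^{(q)})^\perp\}=n,$$ where $|x|$ is the Hamming weight.
   Context: Indices are taken in $\mathbb{Z}_{2n}=\{0,\dots,2n-1\}$ with arithmetic mod $2n$. Variable nodes: $V=\{(i,j)\in\mathbb{Z}_{2n}^2: i+j\text{ even}\}$. $X$-check nodes: $C_X=\{(i,j): i\text{ odd}, j\text{ even}\}$; $Z$-check nodes: $C_Z=\{(i,j): i\text{ even}, j\text{ odd}\}$. Each check node $(i,j)$ is adjacent to the four variable nodes $(i\pm1,j)$, $(i,j\pm1)$. $\mathcal{G}_X$ is the bipartite graph on $V\cup C_X$ and $\mathcal{G}_Z$ on $V\cup C_Z$. A $q$-ary labeling is a matrix $\mathbf{H}_X^{(q)}=(x_{c,v})\in\mathbb{F}_q^{C_X\times V}$ with $x_{c,v}\neq0$ iff $c,v$ adjacent, and similarly $\mathbf{H}_Z^{(q)}=(z_{c,v})\in\mathbb{F}_q^{C_Z\times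 V}$. $\mathcal{C}_X^{(q)}=\ker\mathbf{H}_X^{(q)}\subset\mathbb{F}_q^V$, $\mathcal{C}_Z^{(q)}=\ker\mathbf{H}_Z^{(q)}$, and $\perp$ is with respect to the standard bilinear form on $\mathbb{F}_q^V$. For a cycle $v_1,c_1,v_2,\dots,v_k,c_k,v_1$ of labeled $\mathcal{G}_X$ its product is $\prod_{t=1}^k x_{c_t v_{t+1}}x_{c_t v_t}^{-1}$ (indices of $v$ mod $k$). *)

theory Defs
  imports Main
begin

text \<open>Indices in Z_{2n} are represented by naturals 0..<2n, arithmetic mod 2n.\<close>

definition tor_V :: "nat \<Rightarrow> (nat \<times> nat) set" where
  "tor_V n = {(i, j). i < 2*n \<and> j < 2*n \<and> even (i + j)}"

definition tor_CX :: "nat \<Rightarrow> (nat \<times> nat) set" where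
  "tor_CX n = {(i, j). i < 2*n \<and> j < 2*n \<and> odd i \<and> even j}"

definition tor_CZ :: "nat \<Rightarrow> (nat \<times> nat) set" where
  "tor_CZ n = {(i, j). i < 2*n \<and> j < 2*n \<and> even i \<and> odd j}"

definition tor_adj :: "nat \<Rightarrow> nat \<times> nat \<Rightarrow> nat \<times> nat \<Rightarrow> bool" where
  "tor_adj n c v = (case c of (i, j) \<Rightarrow>
     v \<in> {((i + 1) mod (2*n), j), ((i + 2*n - 1) mod (2*n), j),
           (i, (j + 1) mod (2*n)), (i, (j + 2*n - 1) mod (2*n))})"

definition is_labeling ::
  "nat \<Rightarrow> (nat \<times> nat) set \<Rightarrow> (nat \<times> nat \<Rightarrow> nat \<times> nat \<Rightarrow> 'a::field) \<Rightarrow> bool" where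
  "is_labeling n C H = (\<forall>c\<in>C. \<forall>v\<in>tor_V n. (H c v \<noteq> 0) = tor_adj n c v)"

text \<open>Vectors in F_q^V are functions vanishing outside V.\<close>
definition vecs :: "nat \<Rightarrow> (nat \<times> nat \<Rightarrow> 'a::zero) set" where
  "vecs n = {x. \<forall>v. v \<notin> tor_V n \<longrightarrow> x v = 0}"

definition code_ker ::
  "nat \<Rightarrow> (nat \<times> nat) set \<Rightarrow> (nat \<times> nat \<Rightarrow> nat \<times> nat \<Rightarrow> 'a::field) \<Rightarrow> (nat \<times> nat \<Rightarrow> 'a) set" where
  "code_ker n C H = {x \<in> vecs n. \<forall>c\<in>C. (\<Sum>v\<in>tor_V n. H c v * x v) = 0}"

definition dual_code :: "nat \<Rightarrow> (nat \<times> nat \<Rightarrow> 'a::field) set \<Rightarrow> (nat \<times> nat \<Rightarrow> 'a) set" where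
  "dual_code n S = {y \<in> vecs n. \<forall>x\<in>S. (\<Sum>v\<in>tor_V n. x v * y v) = 0}"

definition hweight :: "nat \<Rightarrow> (nat \<times> nat \<Rightarrow> 'a::zero) \<Rightarrow> nat" where
  "hweight n x = card {v \<in> tor_V n. x v \<noteq> 0}"

text \<open>A cycle v_1,c_1,v_2,...,v_k,c_k,v_1 in the bipartite graph on V and C
  (k >= 2, vertices pairwise distinct), given as lists vs, cs of length k
  (0-indexed).\<close>
definition is_cycle ::
  "nat \<Rightarrow> (nat \<times> nat) set \<Rightarrow> (nat \<times> nat) list \<Rightarrow> (nat \<times> nat) list \<Rightarrow> bool" where
  "is_cycle n C vs cs = (length vs = length cs \<and> length vs \<ge> 2 \<and>
      distinct vs \<and> distinct cs \<and> set vs \<subseteq> tor_V n \<and> set cs \<subseteq> C \<and>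
      (\<forall>t < length vs. tor_adj n (cs ! t) (vs ! t) \<and>
                        tor_adj n (cs ! t) (vs ! ((t + 1) mod length vs))))"

definition cycle_product ::
  "(nat \<times> nat \<Rightarrow> nat \<times> nat \<Rightarrow> 'a::field) \<Rightarrow> (nat \<times> nat) list \<Rightarrow> (nat \<times> nat) list \<Rightarrow> 'a" where
  "cycle_product H vs cs =
     (\<Prod>t < length vs. H (cs ! t) (vs ! ((t + 1) mod length vs)) * inverse (H (cs ! t) (vs ! t)))"

end

theory Submission
  imports Defs "HOL-Number_Theory.Residues"
begin

text \<open>
  A codeword x of the X-code of weight less than n misses a whole column and a whole
  row of the torus. Starting from the empty row, x is written as a combination of the rows of
  \<open>H\<^sub>Z\<close> one column of Z-checks at a time: the check equations of x together with the
  orthogonality of \<open>H\<^sub>X\<close> and \<open>H\<^sub>Z\<close> propagate the solution upwards (in characteristic 2 no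
  signs intervene), and the empty column makes it close up consistently around the torus. So x lies
  in the row space of \<open>H\<^sub>Z\<close>, which is the dual of the Z-code. The Z-code is handled in the same way
  after a diagonal translation of the torus, which exchanges the two check patterns.

  As all cycle products are 1, the labels along the vertical cycle of column 1 can be
  balanced by nonzero weights, giving an X-codeword of weight n supported on that column. Balancing
  the horizontal cycle of row 0 similarly yields a Z-codeword of weight n supported on row 1. The two
  meet in a single position, so neither lies in the dual of the other code.
\<close>

section \<open>Characteristic two\<close>

lemma one_add_one_eq_zero_if_card_eq_power_two:
  assumes "card (UNIV :: 'a::{field,finite} set) = 2 ^ m" "m \<ge> 1"
  shows "(1::'a) + 1 = 0"
proof -
  have "CHAR('a) dvd card (UNIV :: 'a set)" by (rule CHAR_dvd_CARD)
  hence "of_nat (card (UNIV :: 'a set)) = (0::'a)" by (simp add: of_nat_eq_0_iff_char_dvd)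
  hence "(2::'a) ^ m = 0" using assms(1) by simp
  thus ?thesis by (simp add: one_add_one)
qed

lemma add_self_eq_zero_char2:
  assumes "(1::'a::ring_1) + 1 = 0"
  shows "x + x = (0::'a)"
  using assms by (metis distrib_right mult_1 mult_zero_left)

lemma add_eq_zero_iff_eq_char2:
  assumes "(1::'a::ring_1) + 1 = 0"
  shows "a + b = 0 \<longleftrightarrow> a = (b::'a)"
  by (metis add_self_eq_zero_char2[OF assms] add_right_cancel)

lemma char2_add_cancel:
  assumes "(1::'a::ring_1) + 1 = 0"
  shows "a + b = c \<longleftrightarrow> a = c + (b::'a)"
  by (metis add.assoc add_self_eq_zero_char2[OF assms] add_0_right)

section \<open>Integer coordinates on the torus\<close>

definition tor_pt :: "nat \<Rightarrow> int \<Rightarrow> int \<Rightarrow> nat \<times> nat" where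
  "tor_pt n i j = (nat (i mod (2 * int n)), nat (j mod (2 * int n)))"

definition tor_nbrs :: "nat \<Rightarrow> int \<Rightarrow> int \<Rightarrow> (nat \<times> nat) set" where
  "tor_nbrs n i j = {tor_pt n (i + 1) j, tor_pt n (i - 1) j, tor_pt n i (j + 1), tor_pt n i (j - 1)}"

lemma tor_pt_mod [simp]: "tor_pt n (i mod (2 * int n)) (j mod (2 * int n)) = tor_pt n i j"
  by (simp add: tor_pt_def)

lemma tor_pt_int [simp]: "a < 2 * n \<Longrightarrow> b < 2 * n \<Longrightarrow> tor_pt n (int a) (int b) = (a, b)"
  by (simp add: tor_pt_def zmod_int[symmetric])

lemma tor_CX_grid: "tor_CX n \<subseteq> {..<2*n} \<times> {..<2*n}"
  by (auto simp: tor_CX_def)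

lemma tor_CZ_grid: "tor_CZ n \<subseteq> {..<2*n} \<times> {..<2*n}"
  by (auto simp: tor_CZ_def)

lemma finite_tor_V: "finite (tor_V n)"
  by (rule finite_subset[of _ "{..<2*n} \<times> {..<2*n}"]) (auto simp: tor_V_def)

lemma finite_tor_CX: "finite (tor_CX n)"
  by (rule finite_subset[OF tor_CX_grid]) simp

lemma finite_tor_CZ: "finite (tor_CZ n)"
  by (rule finite_subset[OF tor_CZ_grid]) simp

lemma even_mod_double_iff: "even (x mod (2 * int n)) \<longleftrightarrow> even x"
  by (metis dvd_triv_left even_iff_mod_2_eq_zero mod_mod_cancel)

lemma dvd_double_imp_eq:
  assumes "2 * int n dvd 2 * (int k - int k')" "k < n" "k' < n"
  shows "k = k'"
proof -
  have "int n dvd int k - int k'" using assms(1) by (subst (asm) dvd_times_left_cancel_iff) simp_all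
  hence "int k mod int n = int k' mod int n" by (simp add: mod_eq_dvd_iff)
  thus ?thesis using assms(2,3) by (simp flip: zmod_int)
qed

locale torus =
  fixes n :: nat
  assumes two_le_n: "2 \<le> n"
begin

lemma nat_mod_less: "nat (i mod (2 * int n)) < 2 * n"
  using two_le_n by (simp add: nat_less_iff)

lemma even_nat_mod_iff: "even (nat (i mod (2 * int n))) \<longleftrightarrow> even i"
proof -
  have "even (nat (i mod (2 * int n))) \<longleftrightarrow> even (i mod (2 * int n))"
    using two_le_n by (simp add: even_nat_iff)
  also have "\<dots> \<longleftrightarrow> even i" by (rule even_mod_double_iff)
  finally show ?thesis .
qed

lemma tor_pt_eq_iff:
  "tor_pt n a b = tor_pt n c d \<longleftrightarrow> 2 * int n dvd a - c \<and> 2 * int n dvd b - d"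
  using two_le_n by (simp add: tor_pt_def nat_eq_iff mod_eq_dvd_iff)

lemma tor_pt_in_V_iff: "tor_pt n i j \<in> tor_V n \<longleftrightarrow> even (i + j)"
  by (simp add: tor_pt_def tor_V_def nat_mod_less even_nat_mod_iff)

lemma tor_pt_in_CX_iff: "tor_pt n i j \<in> tor_CX n \<longleftrightarrow> odd i \<and> even j"
  by (simp add: tor_pt_def tor_CX_def nat_mod_less even_nat_mod_iff)

lemma tor_pt_in_CZ_iff: "tor_pt n i j \<in> tor_CZ n \<longleftrightarrow> even i \<and> odd j"
  by (simp add: tor_pt_def tor_CZ_def nat_mod_less even_nat_mod_iff)

lemma tor_adj_tor_pt_iff: "tor_adj n (tor_pt n i j) w \<longleftrightarrow> w \<in> tor_nbrs n i j"
proof -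
  have succ: "(nat (k mod (2 * int n)) + 1) mod (2 * n) = nat ((k + 1) mod (2 * int n))" for k
  proof -
    have "int ((nat (k mod (2 * int n)) + 1) mod (2 * n)) = (k mod (2 * int n) + 1) mod (2 * int n)"
      using two_le_n by (simp add: zmod_int add.commute)
    thus ?thesis by (simp add: mod_add_left_eq)
  qed
  have pred: "(nat (k mod (2 * int n)) + 2 * n - 1) mod (2 * n) = nat ((k - 1) mod (2 * int n))" for k
  proof -
    have "int (nat (k mod (2 * int n)) + 2 * n - 1) = k mod (2 * int n) - 1 + 2 * int n"
      using two_le_n by (simp add: of_nat_diff)
    hence "int ((nat (k mod (2 * int n)) + 2 * n - 1) mod (2 * n)) = (k - 1) mod (2 * int n)"
      by (simp add: zmod_int mod_diff_left_eq)
    thus ?thesis by simp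
  qed
  show ?thesis
    by (simp only: tor_adj_def tor_nbrs_def tor_pt_def split succ pred)
qed

lemma tor_adj_imp_dvd:
  "tor_adj n (tor_pt n i j) (tor_pt n k l) \<Longrightarrow> 2 * int n dvd k - i \<or> 2 * int n dvd l - j"
  by (auto simp: tor_adj_tor_pt_iff tor_nbrs_def tor_pt_eq_iff)

lemma not_dvd_small:
  assumes "0 < \<bar>d\<bar>" "\<bar>d\<bar> \<le> 2"
  shows "\<not> 2 * int n dvd d"
proof
  assume "2 * int n dvd d"
  hence "2 * int n \<le> \<bar>d\<bar>" using assms(1) by (simp add: zdvd_imp_le)
  thus False using assms(2) two_le_n by simp
qed

lemma tor_adj_commute:
  assumes "tor_adj n (tor_pt n i j) (tor_pt n k l)"
  shows "tor_pt n i j \<in> tor_nbrs n k l"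
proof -
  have "2 * int n dvd x - y \<longleftrightarrow> 2 * int n dvd y - x" for x y
    by (metis dvd_minus_iff minus_diff_eq)
  then show ?thesis
    using assms by (auto simp: tor_adj_tor_pt_iff tor_nbrs_def tor_pt_eq_iff algebra_simps)
qed

lemma tor_nbrs_distinct:
  "tor_pt n (i + 1) j \<noteq> tor_pt n (i - 1) j" "tor_pt n (i + 1) j \<noteq> tor_pt n i (j + 1)"
  "tor_pt n (i + 1) j \<noteq> tor_pt n i (j - 1)" "tor_pt n (i - 1) j \<noteq> tor_pt n i (j + 1)"
  "tor_pt n (i - 1) j \<noteq> tor_pt n i (j - 1)" "tor_pt n i (j + 1) \<noteq> tor_pt n i (j - 1)"
  using not_dvd_small[of 1] not_dvd_small[of "-1"] not_dvd_small[of 2]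
  by (simp_all add: tor_pt_eq_iff)

lemma tor_pt_fst_step_mod: "tor_pt n (p + 2 * k) b = tor_pt n (p + 2 * (k mod int n)) b"
  by (simp add: tor_pt_eq_iff minus_mod_eq_mult_div flip: right_diff_distrib)

lemma tor_pt_snd_step_mod: "tor_pt n a (p + 2 * k) = tor_pt n a (p + 2 * (k mod int n))"
  by (simp add: tor_pt_eq_iff minus_mod_eq_mult_div flip: right_diff_distrib)

lemma tor_pt_fst_step_inj:
  "tor_pt n (p + 2 * int k) b = tor_pt n (p + 2 * int k') b' \<Longrightarrow> k < n \<Longrightarrow> k' < n \<Longrightarrow> k = k'"
  by (rule dvd_double_imp_eq) (simp_all add: tor_pt_eq_iff right_diff_distrib)

lemma tor_pt_snd_step_inj:
  "tor_pt n a (p + 2 * int k) = tor_pt n a' (p + 2 * int k') \<Longrightarrow> k < n \<Longrightarrow> k' < n \<Longrightarrow> k = k'"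
  by (rule dvd_double_imp_eq) (simp_all add: tor_pt_eq_iff right_diff_distrib)

lemma tor_pt_canonical:
  assumes "c \<in> C" "C \<subseteq> {..<2*n} \<times> {..<2*n}"
  obtains i j where "c = tor_pt n i j" "0 \<le> i" "i < 2 * int n" "0 \<le> j" "j < 2 * int n"
proof -
  obtain p q where "c = (p, q)" "p < 2 * n" "q < 2 * n" using assms by auto
  thus ?thesis by (intro that[of "int p" "int q"]) simp_all
qed

end

section \<open>Labelings and codes\<close>

lemma in_dual_code_if_check_combination:
  assumes x: "x \<in> vecs n" and C: "finite C"
    and comb: "\<And>v. v \<in> tor_V n \<Longrightarrow> x v = (\<Sum>c\<in>C. F c * H c v)"
  shows "x \<in> dual_code n (code_ker n C H)"
  unfolding dual_code_def
proof (intro CollectI conjI ballI x)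
  fix z assume z: "z \<in> code_ker n C H"
  have "(\<Sum>v\<in>tor_V n. z v * x v) = (\<Sum>c\<in>C. F c * (\<Sum>v\<in>tor_V n. H c v * z v))"
    by (simp add: comb sum_distrib_left sum_distrib_right sum.swap[of _ C] ac_simps)
  also have "\<dots> = 0" using z by (simp add: code_ker_def)
  finally show "(\<Sum>v\<in>tor_V n. z v * x v) = 0" .
qed

lemma check_row_in_dual_code:
  assumes "c \<in> C"
  shows "(\<lambda>v. if v \<in> tor_V n then H c v else 0) \<in> dual_code n (code_ker n C H)"
  unfolding dual_code_def
proof (intro CollectI conjI ballI)
  show "(\<lambda>v. if v \<in> tor_V n then H c v else 0) \<in> vecs n" by (simp add: vecs_def)
  fix z assume "z \<in> code_ker n C H"
  hence "(\<Sum>v\<in>tor_V n. H c v * z v) = 0" using assms by (simp add: code_ker_def)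
  thus "(\<Sum>v\<in>tor_V n. z v * (if v \<in> tor_V n then H c v else 0)) = 0"
    by (simp add: mult.commute cong: sum.cong)
qed

lemma labelings_orthogonal_if_dual_subset:
  assumes "dual_code n (code_ker n C' H') \<subseteq> code_ker n C H" "c \<in> C" "c' \<in> C'"
  shows "(\<Sum>v\<in>tor_V n. H c v * H' c' v) = 0"
proof -
  have "(\<lambda>v. if v \<in> tor_V n then H' c' v else 0) \<in> code_ker n C H"
    using check_row_in_dual_code[OF assms(3)] assms(1) by blast
  thus ?thesis using assms(2) by (simp add: code_ker_def cong: sum.cong)
qed

lemma is_labelingD: "is_labeling n C H \<Longrightarrow> c \<in> C \<Longrightarrow> v \<in> tor_V n \<Longrightarrow> H c v \<noteq> 0 \<longleftrightarrow> tor_adj n c v"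
  unfolding is_labeling_def by blast

context torus
begin

lemma labeling_nonzero:
  assumes "is_labeling n C H" "tor_pt n i j \<in> C" "odd (i + j)" "v \<in> tor_nbrs n i j"
  shows "H (tor_pt n i j) v \<noteq> 0"
proof -
  have "v \<in> tor_V n" using assms(3,4) by (auto simp: tor_nbrs_def tor_pt_in_V_iff)
  thus ?thesis using is_labelingD[OF assms(1,2)] assms(4) by (simp add: tor_adj_tor_pt_iff)
qed

lemma labeling_check_sum:
  assumes lab: "is_labeling n C H" and c: "tor_pt n i j \<in> C" and ij: "odd (i + j)"
  shows "(\<Sum>v\<in>tor_V n. H (tor_pt n i j) v * g v) =
     H (tor_pt n i j) (tor_pt n (i + 1) j) * g (tor_pt n (i + 1) j) +
     H (tor_pt n i j) (tor_pt n (i - 1) j) * g (tor_pt n (i - 1) j) +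
     H (tor_pt n i j) (tor_pt n i (j + 1)) * g (tor_pt n i (j + 1)) +
     H (tor_pt n i j) (tor_pt n i (j - 1)) * g (tor_pt n i (j - 1))" (is "_ = ?rhs")
proof -
  have nbrs: "tor_nbrs n i j \<subseteq> tor_V n" using ij by (auto simp: tor_nbrs_def tor_pt_in_V_iff)
  have "H (tor_pt n i j) v = 0" if "v \<in> tor_V n - tor_nbrs n i j" for v
    using is_labelingD[OF lab c] that tor_adj_tor_pt_iff by blast
  hence "(\<Sum>v\<in>tor_V n. H (tor_pt n i j) v * g v) = (\<Sum>v\<in>tor_nbrs n i j. H (tor_pt n i j) v * g v)"
    by (intro sum.mono_neutral_right[OF finite_tor_V nbrs]) auto
  also have "\<dots> = ?rhs"
    using tor_nbrs_distinct[of i j] by (simp add: tor_nbrs_def add.assoc)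
  finally show ?thesis .
qed

lemma code_ker_check:
  assumes "x \<in> code_ker n C H" "is_labeling n C H" "tor_pt n i j \<in> C" "odd (i + j)"
  shows "H (tor_pt n i j) (tor_pt n (i + 1) j) * x (tor_pt n (i + 1) j) +
     H (tor_pt n i j) (tor_pt n (i - 1) j) * x (tor_pt n (i - 1) j) +
     H (tor_pt n i j) (tor_pt n i (j + 1)) * x (tor_pt n i (j + 1)) +
     H (tor_pt n i j) (tor_pt n i (j - 1)) * x (tor_pt n i (j - 1)) = 0"
  using assms labeling_check_sum[OF assms(2-4), of x] by (simp add: code_ker_def)

lemma labeling_variable_sum:
  assumes lab: "is_labeling n C H" and grid: "C \<subseteq> {..<2*n} \<times> {..<2*n}" and C: "finite C"
    and ab: "even (a + b)"
  shows "(\<Sum>c\<in>C. g c * H c (tor_pt n a b)) = (\<Sum>c\<in>C \<inter> tor_nbrs n a b. g c * H c (tor_pt n a b))"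
proof (rule sum.mono_neutral_right[OF C])
  show "\<forall>c\<in>C - C \<inter> tor_nbrs n a b. g c * H c (tor_pt n a b) = 0"
  proof
    fix c assume c: "c \<in> C - C \<inter> tor_nbrs n a b"
    then obtain p q where pq: "c = (p, q)" "p < 2 * n" "q < 2 * n" using grid by auto
    hence "c = tor_pt n (int p) (int q)" by simp
    hence "\<not> tor_adj n c (tor_pt n a b)" using c tor_adj_commute by blast
    moreover have "tor_pt n a b \<in> tor_V n" using ab by (simp add: tor_pt_in_V_iff)
    ultimately have "H c (tor_pt n a b) = 0"
      using is_labelingD[OF lab] c by blast
    thus "g c * H c (tor_pt n a b) = 0" by simp
  qed
qed auto

lemma diagonal_checks_orthogonal:
  assumes lab: "is_labeling n C H" and lab': "is_labeling n C' H'"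
    and c: "tor_pt n i j \<in> C" and c': "tor_pt n (i + s) (j + t) \<in> C'" and ij: "odd (i + j)"
    and s: "s = 1 \<or> s = -1" and t: "t = 1 \<or> t = -1"
    and orth: "(\<Sum>v\<in>tor_V n. H (tor_pt n i j) v * H' (tor_pt n (i + s) (j + t)) v) = 0"
  shows "H (tor_pt n i j) (tor_pt n (i + s) j) * H' (tor_pt n (i + s) (j + t)) (tor_pt n (i + s) j)
       + H (tor_pt n i j) (tor_pt n i (j + t)) * H' (tor_pt n (i + s) (j + t)) (tor_pt n i (j + t)) = 0"
proof -
  let ?c' = "tor_pt n (i + s) (j + t)"
  have far: "H' ?c' (tor_pt n k l) = 0"
    if "even (k + l)" "\<not> 2 * int n dvd k - (i + s)" "\<not> 2 * int n dvd l - (j + t)" for k l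
  proof -
    have "\<not> tor_adj n ?c' (tor_pt n k l)" using tor_adj_imp_dvd that(2,3) by blast
    moreover have "tor_pt n k l \<in> tor_V n" using that(1) by (simp add: tor_pt_in_V_iff)
    ultimately show ?thesis using is_labelingD[OF lab' c'] by blast
  qed
  have "H' ?c' (tor_pt n (i - s) j) = 0" "H' ?c' (tor_pt n i (j - t)) = 0"
    by (rule far; use ij s t not_dvd_small[of 1] not_dvd_small[of "-1"] not_dvd_small[of 2]
        not_dvd_small[of "-2"] in auto)+
  with orth labeling_check_sum[OF lab c ij, of "H' ?c'"] s t show ?thesis
    by (auto simp: algebra_simps)
qed

end

section \<open>Sweeping a low-weight codeword into the dual code\<close>

text \<open>
  The algebra of one sweep step around a check with labels a1, a2, a3, a4 at its left, right,
  lower and upper variable, where Y takes the values yL, yR, y0, y4; the bL and bR are labels of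
  the two neighbouring checks of the other kind in the left and right column.
\<close>

lemma char2_sweep_step:
  fixes a1 a2 a3 a4 y0 yL yR y4 sL sR sL' sR' bL0 bL1 bL2 bL3 bR0 bR1 bR2 bR3 :: "'a::field"
  assumes char2: "(1::'a) + 1 = 0" and nz: "a4 \<noteq> 0" "bL2 \<noteq> 0" "bR2 \<noteq> 0"
    and IH: "y0 = sL * bL0 + sR * bR0"
    and recL: "sL' = (yL + sL * bL1) / bL2" and recR: "sR' = (yR + sR * bR1) / bR2"
    and check: "a2 * yR + a1 * yL + a4 * y4 + a3 * y0 = 0"
    and o1: "a1 * bL1 + a3 * bL0 = 0" and o2: "a2 * bR1 + a3 * bR0 = 0"
    and o3: "a1 * bL2 + a4 * bL3 = 0" and o4: "a2 * bR2 + a4 * bR3 = 0"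
  shows "y4 = sL' * bL3 + sR' * bR3"
proof -
  note eq = add_eq_zero_iff_eq_char2[OF char2]
  have "a4 * (sL' * bL3 + sR' * bR3) = sL' * (a4 * bL3) + sR' * (a4 * bR3)"
    by (simp add: algebra_simps)
  also have "\<dots> = a1 * (sL' * bL2) + a2 * (sR' * bR2)"
  proof -
    have "a4 * bL3 = a1 * bL2" "a4 * bR3 = a2 * bR2" using o3 o4 by (simp_all add: eq)
    thus ?thesis by (simp add: ac_simps)
  qed
  also have "\<dots> = a1 * yL + a2 * yR + sL * (a1 * bL1) + sR * (a2 * bR1)"
  proof -
    have "sL' * bL2 = yL + sL * bL1" "sR' * bR2 = yR + sR * bR1" using recL recR nz by simp_all
    thus ?thesis by (simp only:) (simp add: algebra_simps)
  qed
  also have "\<dots> = a1 * yL + a2 * yR + a3 * y0"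
  proof -
    have "a1 * bL1 = a3 * bL0" "a2 * bR1 = a3 * bR0" using o1 o2 by (simp_all only: eq)
    thus ?thesis unfolding IH by (simp add: algebra_simps)
  qed
  also have "\<dots> = a4 * y4"
  proof -
    have "(a2 * yR + a1 * yL + a3 * y0) + a4 * y4 = 0" using check by (simp add: ac_simps)
    thus ?thesis by (simp only: eq) (simp add: ac_simps)
  qed
  finally show ?thesis using nz(1) by simp
qed

text \<open>
  \<open>sweep_coeff Y B j0 i k\<close> is the coefficient of the B-check at (i, j0 + 2k). It is chosen so that
  Y is matched at the variable (i, j0 + 2k + 1) lying between this check and the previous one.
\<close>

fun sweep_coeff :: "(int \<Rightarrow> int \<Rightarrow> 'a::field) \<Rightarrow> (int \<Rightarrow> int \<Rightarrow> int \<Rightarrow> int \<Rightarrow> 'a) \<Rightarrow> int \<Rightarrow> int \<Rightarrow> nat \<Rightarrow> 'a"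
where
  "sweep_coeff Y B j0 i 0 = 0"
| "sweep_coeff Y B j0 i (Suc k) =
     (Y i (j0 + 2 * int k + 1) + sweep_coeff Y B j0 i k * B i (j0 + 2 * int k) i (j0 + 2 * int k + 1))
       / B i (j0 + 2 * int k + 2) i (j0 + 2 * int k + 1)"

text \<open>
  The sweep works in integer coordinates: Y is a vector on the variables (i + j even), A labels the
  checks at (odd, even) of a code containing Y and B the checks at (even, odd).
\<close>

locale sweep = torus +
  fixes Y :: "int \<Rightarrow> int \<Rightarrow> 'a::field" and A B :: "int \<Rightarrow> int \<Rightarrow> int \<Rightarrow> int \<Rightarrow> 'a"
    and i0 j0 :: int
  assumes char2: "(1::'a) + 1 = 0"
    and Y_mod: "\<And>i j. Y i j = Y (i mod (2 * int n)) (j mod (2 * int n))"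
    and B_mod: "\<And>a b c d. B a b c d =
      B (a mod (2 * int n)) (b mod (2 * int n)) (c mod (2 * int n)) (d mod (2 * int n))"
    and B_nonzero: "\<And>i j. even i \<Longrightarrow> odd j \<Longrightarrow>
      B i j (i + 1) j \<noteq> 0 \<and> B i j (i - 1) j \<noteq> 0 \<and> B i j i (j + 1) \<noteq> 0 \<and> B i j i (j - 1) \<noteq> 0"
    and A_nonzero: "\<And>i j. odd i \<Longrightarrow> even j \<Longrightarrow> A i j i (j + 1) \<noteq> 0"
    and A_check: "\<And>i j. odd i \<Longrightarrow> even j \<Longrightarrow>
      A i j (i + 1) j * Y (i + 1) j + A i j (i - 1) j * Y (i - 1) j +
      A i j i (j + 1) * Y i (j + 1) + A i j i (j - 1) * Y i (j - 1) = 0"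
    and orthogonal: "\<And>i j s t. odd i \<Longrightarrow> even j \<Longrightarrow> s = 1 \<or> s = -1 \<Longrightarrow> t = 1 \<or> t = -1 \<Longrightarrow>
      A i j (i + s) j * B (i + s) (j + t) (i + s) j + A i j i (j + t) * B (i + s) (j + t) i (j + t) = 0"
    and even_i0: "even i0" and Y_column_i0: "\<And>j. even j \<Longrightarrow> Y i0 j = 0"
    and odd_j0: "odd j0" and Y_row_j0: "\<And>i. odd i \<Longrightarrow> Y i j0 = 0"
begin

abbreviation S where "S \<equiv> sweep_coeff Y B j0"

lemma Y_cong: "a mod (2 * int n) = a' mod (2 * int n) \<Longrightarrow> b mod (2 * int n) = b' mod (2 * int n) \<Longrightarrow>
    Y a b = Y a' b'"
  by (metis Y_mod)

lemma B_cong: "a mod (2 * int n) = a' mod (2 * int n) \<Longrightarrow> b mod (2 * int n) = b' mod (2 * int n) \<Longrightarrow>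
    c mod (2 * int n) = c' mod (2 * int n) \<Longrightarrow> d mod (2 * int n) = d' mod (2 * int n) \<Longrightarrow>
    B a b c d = B a' b' c' d'"
  by (metis B_mod)

lemma sweep_coeff_mod: "S i k = S (i mod (2 * int n)) k"
proof (induction k)
  case (Suc k)
  have "Y i x = Y (i mod (2 * int n)) x" "B i x i y = B (i mod (2 * int n)) x (i mod (2 * int n)) y" for x y
    by (auto intro: Y_cong B_cong)
  thus ?case using Suc by simp
qed simp

lemma sweep_coeff_i0: "S i0 k = 0"
  by (induction k) (simp_all add: Y_column_i0 odd_j0)

lemma sweep_odd_column:
  assumes "odd i"
  shows "Y i (j0 + 2 * int k) =
    S (i - 1) k * B (i - 1) (j0 + 2 * int k) i (j0 + 2 * int k) +
    S (i + 1) k * B (i + 1) (j0 + 2 * int k) i (j0 + 2 * int k)"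
proof (induction k)
  case 0 thus ?case using Y_row_j0[OF assms] by simp
next
  case (Suc k)
  define J where "J = j0 + 2 * int k"
  have eJ: "even (J + 1)" and oJ: "odd (J + 2)" using odd_j0 by (simp_all add: J_def)
  have IH: "Y i J = S (i - 1) k * B (i - 1) J i J + S (i + 1) k * B (i + 1) J i J"
    using Suc.IH by (simp add: J_def)
  have A: "A i (J + 1) (i + 1) (J + 1) * Y (i + 1) (J + 1) + A i (J + 1) (i - 1) (J + 1) * Y (i - 1) (J + 1)
      + A i (J + 1) i (J + 2) * Y i (J + 2) + A i (J + 1) i J * Y i J = 0"
    using A_check[OF assms eJ] by (simp add: add.assoc)
  have o: "A i (J + 1) (i - 1) (J + 1) * B (i - 1) J (i - 1) (J + 1) + A i (J + 1) i J * B (i - 1) J i J = 0"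
    "A i (J + 1) (i + 1) (J + 1) * B (i + 1) J (i + 1) (J + 1) + A i (J + 1) i J * B (i + 1) J i J = 0"
    "A i (J + 1) (i - 1) (J + 1) * B (i - 1) (J + 2) (i - 1) (J + 1)
       + A i (J + 1) i (J + 2) * B (i - 1) (J + 2) i (J + 2) = 0"
    "A i (J + 1) (i + 1) (J + 1) * B (i + 1) (J + 2) (i + 1) (J + 1)
       + A i (J + 1) i (J + 2) * B (i + 1) (J + 2) i (J + 2) = 0"
    using orthogonal[OF assms eJ, of "-1" "-1"] orthogonal[OF assms eJ, of 1 "-1"]
      orthogonal[OF assms eJ, of "-1" 1] orthogonal[OF assms eJ, of 1 1]
    by (simp_all add: add.assoc)
  have nz: "A i (J + 1) i (J + 2) \<noteq> 0" "B (i - 1) (J + 2) (i - 1) (J + 1) \<noteq> 0"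
    "B (i + 1) (J + 2) (i + 1) (J + 1) \<noteq> 0"
    using A_nonzero[OF assms eJ] B_nonzero[of "i - 1" "J + 2"] B_nonzero[of "i + 1" "J + 2"] assms oJ
    by (simp_all add: add.assoc flip: add_diff_eq)
  moreover have "Y i (J + 2) = S (i - 1) (Suc k) * B (i - 1) (J + 2) i (J + 2) + S (i + 1) (Suc k) * B (i + 1) (J + 2) i (J + 2)"
    by (rule char2_sweep_step[OF char2 nz IH _ _ A o]) (simp_all add: J_def)
  moreover have "j0 + 2 * int (Suc k) = J + 2" by (simp add: J_def)
  ultimately show ?case by (simp only:)
qed

lemma sweep_coeff_n:
  assumes "even i"
  shows "S i n = 0"
proof -
  have step: "S (i' + 1) n = 0" if "odd i'" "S (i' - 1) n = 0" for i'
  proof -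
    define J where "J = j0 + 2 * int n"
    have "Y i' J = Y i' j0" by (rule Y_cong) (simp_all add: J_def)
    hence "S (i' + 1) n * B (i' + 1) J i' J = 0"
      using sweep_odd_column[OF that(1), of n] Y_row_j0[OF that(1)] that(2) by (simp add: J_def)
    moreover have "B (i' + 1) J i' J \<noteq> 0"
      using B_nonzero[of "i' + 1" J] that(1) odd_j0 by (simp add: J_def)
    ultimately show ?thesis by simp
  qed
  have from_i0: "S (i0 + 2 * int t) n = 0" for t
  proof (induction t)
    case 0 thus ?case using sweep_coeff_i0 by simp
  next
    case (Suc t)
    have "odd (i0 + 2 * int t + 1)" using even_i0 by simp
    from step[OF this] Suc show ?case by (simp add: algebra_simps)
  qed
  define t where "t = nat (((i - i0) mod (2 * int n)) div 2)"
  have "even ((i - i0) mod (2 * int n))" using assms even_i0 by (simp add: even_mod_double_iff)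
  hence "2 * int t = (i - i0) mod (2 * int n)" using two_le_n by (simp add: t_def)
  hence "(i0 + 2 * int t) mod (2 * int n) = i mod (2 * int n)" by (simp add: mod_add_right_eq)
  thus ?thesis using from_i0[of t] sweep_coeff_mod[of i] sweep_coeff_mod[of "i0 + 2 * int t"] by simp
qed

lemma sweep_coeff_mod_n:
  assumes "even i"
  shows "S i k = S i (k mod n)"
proof -
  have period: "S i (k + n) = S i k" for k
  proof (induction k)
    case 0 thus ?case using sweep_coeff_n[OF assms] by simp
  next
    case (Suc k)
    have shift: "(j0 + 2 * int (k + n) + c) mod (2 * int n) = (j0 + 2 * int k + c) mod (2 * int n)" for c
    proof -
      have "j0 + 2 * int (k + n) + c = (j0 + 2 * int k + c) + 2 * int n" by simp
      thus ?thesis by (simp only: mod_add_self2)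
    qed
    have "Y i (j0 + 2 * int (k + n) + 1) = Y i (j0 + 2 * int k + 1)"
      "B i (j0 + 2 * int (k + n)) i (j0 + 2 * int (k + n) + 1) = B i (j0 + 2 * int k) i (j0 + 2 * int k + 1)"
      "B i (j0 + 2 * int (k + n) + 2) i (j0 + 2 * int (k + n) + 1) = B i (j0 + 2 * int k + 2) i (j0 + 2 * int k + 1)"
      using shift[of 0] shift[of 1] shift[of 2] by (auto intro!: Y_cong B_cong)
    thus ?case using Suc by simp
  qed
  have "S i (k mod n + n * m) = S i (k mod n)" for m
  proof (induction m)
    case (Suc m)
    have "k mod n + n * Suc m = (k mod n + n * m) + n" by simp
    thus ?case using Suc period by presburger
  qed simp
  from this[of "k div n"] show ?thesis by simp
qed

lemma B_nonzero_below: "even i \<Longrightarrow> even j \<Longrightarrow> B i (j + 1) i j \<noteq> 0"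
  using B_nonzero[of i "j + 1"] by simp

definition sweep_sol :: "int \<Rightarrow> int \<Rightarrow> 'a" where
  "sweep_sol i j = S i (nat (((j - j0) div 2) mod int n))"

lemma sweep_sol_cong:
  assumes "i mod (2 * int n) = i' mod (2 * int n)" "j mod (2 * int n) = j' mod (2 * int n)"
  shows "sweep_sol i j = sweep_sol i' j'"
proof -
  have "((j - j0) div 2) mod int n = ((j mod (2 * int n) - j0) div 2) mod int n" for j
  proof -
    have "j mod (2 * int n) = j - 2 * int n * (j div (2 * int n))"
      by (simp add: minus_div_mult_eq_mod[symmetric])
    hence "(j mod (2 * int n) - j0) div 2 = (j - j0) div 2 + int n * - (j div (2 * int n))"
      by (simp add: algebra_simps)
    thus ?thesis by (simp add: mod_eq_dvd_iff)
  qed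
  hence "sweep_sol i j = S (i mod (2 * int n)) (nat (((j mod (2 * int n) - j0) div 2) mod int n))" for i j
    using sweep_coeff_mod unfolding sweep_sol_def by presburger
  thus ?thesis using assms by simp
qed

lemma sweep_sol_at:
  assumes "even i"
  shows "sweep_sol i (j0 + 2 * int k) = S i k"
  using sweep_coeff_mod_n[OF assms, of k] two_le_n by (simp add: sweep_sol_def zmod_int nat_mod_distrib)

lemma exists_sweep_index:
  assumes "even (j - j0)"
  obtains k where "(j0 + 2 * int k) mod (2 * int n) = j mod (2 * int n)"
proof
  define t where "t = (j - j0) div 2"
  have "j = j0 + 2 * t" using assms by (simp add: t_def)
  moreover have "2 * (t mod int n) = (2 * t) mod (2 * int n)" by (rule mult_mod_right)
  hence "(j0 + 2 * (t mod int n)) mod (2 * int n) = (j0 + 2 * t) mod (2 * int n)"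
    by (metis mod_add_right_eq)
  ultimately show "(j0 + 2 * int (nat (t mod int n))) mod (2 * int n) = j mod (2 * int n)"
    using two_le_n by simp
qed

lemma sweep_sol_even:
  assumes "even i" "even j"
  shows "Y i j = sweep_sol i (j - 1) * B i (j - 1) i j + sweep_sol i (j + 1) * B i (j + 1) i j"
proof -
  obtain k where k: "(j0 + 2 * int k) mod (2 * int n) = (j - 1) mod (2 * int n)"
    using exists_sweep_index[of "j - 1"] assms(2) odd_j0 by auto
  have k1: "(j0 + 2 * int k + 1) mod (2 * int n) = j mod (2 * int n)"
    using mod_add_cong[OF k, of 1 1] by simp
  have k2: "(j0 + 2 * int k + 2) mod (2 * int n) = (j + 1) mod (2 * int n)"
    using mod_add_cong[OF k, of 2 2] by (simp add: ac_simps)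
  have "even (j0 + 2 * int k + 1)" using odd_j0 by simp
  from B_nonzero_below[OF assms(1) this]
  have "Y i (j0 + 2 * int k + 1) + S i k * B i (j0 + 2 * int k) i (j0 + 2 * int k + 1) =
      S i (Suc k) * B i (j0 + 2 * int k + 2) i (j0 + 2 * int k + 1)"
    by (simp add: add.assoc)
  hence "Y i (j0 + 2 * int k + 1) = S i (Suc k) * B i (j0 + 2 * int k + 2) i (j0 + 2 * int k + 1) +
      S i k * B i (j0 + 2 * int k) i (j0 + 2 * int k + 1)"
    using char2_add_cancel[OF char2] by blast
  moreover have "sweep_sol i (j - 1) = S i k" "sweep_sol i (j + 1) = S i (Suc k)"
  proof -
    have e: "j0 + 2 * int (Suc k) = j0 + 2 * int k + 2" by simp
    show "sweep_sol i (j - 1) = S i k" "sweep_sol i (j + 1) = S i (Suc k)"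
      using trans[OF sweep_sol_cong[OF refl k[symmetric]] sweep_sol_at[OF assms(1), of k]]
        trans[OF sweep_sol_cong[OF refl k2[symmetric]] sweep_sol_at[OF assms(1), of "Suc k", unfolded e]]
      by simp_all
  qed
  moreover have "Y i (j0 + 2 * int k + 1) = Y i j"
    "B i (j0 + 2 * int k + 2) i (j0 + 2 * int k + 1) = B i (j + 1) i j"
    "B i (j0 + 2 * int k) i (j0 + 2 * int k + 1) = B i (j - 1) i j"
    by (rule Y_cong B_cong; simp only: k k1 k2)+
  ultimately show ?thesis by (simp del: sweep_coeff.simps add: add.commute)
qed

lemma sweep_sol_odd:
  assumes "odd i" "odd j"
  shows "Y i j = sweep_sol (i - 1) j * B (i - 1) j i j + sweep_sol (i + 1) j * B (i + 1) j i j"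
proof -
  obtain k where k: "(j0 + 2 * int k) mod (2 * int n) = j mod (2 * int n)"
    using exists_sweep_index[of j] assms(2) odd_j0 by auto
  have "sweep_sol (i - 1) j = S (i - 1) k" "sweep_sol (i + 1) j = S (i + 1) k"
    using sweep_sol_cong[OF refl k[symmetric]] sweep_sol_at[of "i - 1" k] sweep_sol_at[of "i + 1" k] assms(1)
    by simp_all
  moreover have "Y i (j0 + 2 * int k) = Y i j" "B (i - 1) (j0 + 2 * int k) i (j0 + 2 * int k) = B (i - 1) j i j"
    "B (i + 1) (j0 + 2 * int k) i (j0 + 2 * int k) = B (i + 1) j i j"
    by (auto intro!: Y_cong B_cong simp: k)
  ultimately show ?thesis using sweep_odd_column[OF assms(1), of k] by simp
qed

end

lemma hweight_swap: "hweight n (x \<circ> prod.swap) = hweight n x"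
proof -
  have "{v \<in> tor_V n. (x \<circ> prod.swap) v \<noteq> 0} = prod.swap ` {v \<in> tor_V n. x v \<noteq> 0}"
    by (auto simp: tor_V_def image_iff add.commute)
  thus ?thesis by (simp add: hweight_def card_image)
qed

context torus
begin

lemma exists_zero_column:
  assumes w: "hweight n x < n"
  shows "\<exists>a. even (a - p) \<and> (\<forall>b. even (a + b) \<longrightarrow> x (tor_pt n a b) = 0)"
proof (rule ccontr)
  assume "\<not> ?thesis"
  hence "\<forall>a. even (a - p) \<longrightarrow> (\<exists>b. even (a + b) \<and> x (tor_pt n a b) \<noteq> 0)" by blast
  hence "\<forall>k. \<exists>b. even (p + 2 * int k + b) \<and> x (tor_pt n (p + 2 * int k) b) \<noteq> 0" by simp
  then obtain g where g: "\<And>k. even (p + 2 * int k + g k) \<and> x (tor_pt n (p + 2 * int k) (g k)) \<noteq> 0"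
    by metis
  have "card {..<n} \<le> hweight n x" unfolding hweight_def
  proof (rule card_inj_on_le)
    show "inj_on (\<lambda>k. tor_pt n (p + 2 * int k) (g k)) {..<n}"
      by (auto intro!: inj_onI tor_pt_fst_step_inj)
    show "(\<lambda>k. tor_pt n (p + 2 * int k) (g k)) ` {..<n} \<subseteq> {v \<in> tor_V n. x v \<noteq> 0}"
      using g by (auto simp: tor_pt_in_V_iff)
  qed (simp add: finite_tor_V)
  thus False using w by simp
qed

lemma exists_zero_row:
  assumes "hweight n x < n"
  shows "\<exists>b. even (b - p) \<and> (\<forall>a. even (a + b) \<longrightarrow> x (tor_pt n a b) = 0)"
proof -
  have "prod.swap (tor_pt n a b) = tor_pt n b a" for a b by (simp add: tor_pt_def)
  thus ?thesis
    using exists_zero_column[of "x \<circ> prod.swap" p] assms by (simp add: hweight_swap add.commute)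
qed

end

text \<open>
  C, H are the checks and the labeling of one code and C', H' those of the other. The check sets
  follow the pattern of \<open>tor_CX\<close> and \<open>tor_CZ\<close> after a diagonal translation by d (d = 0 when the
  first code is the X-code, d = 1 when it is the Z-code); the sweep coordinate (i, j) corresponds to
  the torus point (i + d, j + d).
\<close>

locale css_pair = torus +
  fixes C C' :: "(nat \<times> nat) set" and H H' :: "nat \<times> nat \<Rightarrow> nat \<times> nat \<Rightarrow> 'a::field" and d :: int
  assumes char2: "(1::'a) + 1 = 0"
    and lab: "is_labeling n C H" and lab': "is_labeling n C' H'"
    and C_iff: "\<And>i j. tor_pt n i j \<in> C \<longleftrightarrow> odd (i + d) \<and> even (j + d)"
    and C'_iff: "\<And>i j. tor_pt n i j \<in> C' \<longleftrightarrow> even (i + d) \<and> odd (j + d)"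
    and C'_grid: "C' \<subseteq> {..<2*n} \<times> {..<2*n}" and C'_finite: "finite C'"
    and orth: "\<And>c c'. c \<in> C \<Longrightarrow> c' \<in> C' \<Longrightarrow> (\<Sum>v\<in>tor_V n. H c v * H' c' v) = 0"
begin

definition shift_vec :: "(nat \<times> nat \<Rightarrow> 'a) \<Rightarrow> int \<Rightarrow> int \<Rightarrow> 'a" where
  "shift_vec x i j = x (tor_pt n (i + d) (j + d))"

definition shift_lab :: "(nat \<times> nat \<Rightarrow> nat \<times> nat \<Rightarrow> 'a) \<Rightarrow> int \<Rightarrow> int \<Rightarrow> int \<Rightarrow> int \<Rightarrow> 'a" where
  "shift_lab G i j k l = G (tor_pt n (i + d) (j + d)) (tor_pt n (k + d) (l + d))"

lemma tor_pt_shift_mod: "tor_pt n (i mod (2 * int n) + d) (j mod (2 * int n) + d) = tor_pt n (i + d) (j + d)"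
  by (metis mod_add_left_eq tor_pt_mod)

lemma sweep_shifted_codeword:
  assumes x: "x \<in> code_ker n C H"
    and a: "even (a - d)" "\<And>b. even (a + b) \<Longrightarrow> x (tor_pt n a b) = 0"
    and b: "odd (b - d)" "\<And>a. even (a + b) \<Longrightarrow> x (tor_pt n a b) = 0"
  shows "sweep n (shift_vec x) (shift_lab H) (shift_lab H') (a - d) (b - d)"
proof unfold_locales
  show "(1::'a) + 1 = 0" by (rule char2)
  show "shift_vec x i j = shift_vec x (i mod (2 * int n)) (j mod (2 * int n))" for i j
    by (simp add: shift_vec_def tor_pt_shift_mod)
  show "shift_lab H' p q k l =
      shift_lab H' (p mod (2 * int n)) (q mod (2 * int n)) (k mod (2 * int n)) (l mod (2 * int n))"
    for p q k l by (simp add: shift_lab_def tor_pt_shift_mod)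
  show "shift_lab H' i j (i + 1) j \<noteq> 0 \<and> shift_lab H' i j (i - 1) j \<noteq> 0 \<and>
      shift_lab H' i j i (j + 1) \<noteq> 0 \<and> shift_lab H' i j i (j - 1) \<noteq> 0" if "even i" "odd j" for i j
    using labeling_nonzero[OF lab', of "i + d" "j + d"] that
    by (simp add: shift_lab_def C'_iff tor_nbrs_def algebra_simps)
  show "shift_lab H i j i (j + 1) \<noteq> 0" if "odd i" "even j" for i j
    using labeling_nonzero[OF lab, of "i + d" "j + d"] that
    by (simp add: shift_lab_def C_iff tor_nbrs_def ac_simps)
  show "shift_lab H i j (i + 1) j * shift_vec x (i + 1) j + shift_lab H i j (i - 1) j * shift_vec x (i - 1) j +
      shift_lab H i j i (j + 1) * shift_vec x i (j + 1) + shift_lab H i j i (j - 1) * shift_vec x i (j - 1) = 0"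
    if "odd i" "even j" for i j
    using code_ker_check[OF x lab, of "i + d" "j + d"] that
    by (simp add: shift_lab_def shift_vec_def C_iff algebra_simps)
  show "shift_lab H i j (i + s) j * shift_lab H' (i + s) (j + t) (i + s) j +
      shift_lab H i j i (j + t) * shift_lab H' (i + s) (j + t) i (j + t) = 0"
    if "odd i" "even j" "s = 1 \<or> s = -1" "t = 1 \<or> t = -1" for i j s t
  proof -
    have "tor_pt n (i + d) (j + d) \<in> C" "tor_pt n (i + d + s) (j + d + t) \<in> C'"
      using that by (auto simp: C_iff C'_iff)
    from diagonal_checks_orthogonal[OF lab lab' this _ that(3,4) orth[OF this]] that
    show ?thesis by (simp add: shift_lab_def algebra_simps)
  qed
  show "shift_vec x (a - d) j = 0" if "even j" for j using a that by (simp add: shift_vec_def)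
  show "shift_vec x i (b - d) = 0" if "odd i" for i using b that by (simp add: shift_vec_def)
qed (use a b in simp_all)

lemma in_dual_code_if_sweep:
  assumes x: "x \<in> vecs n" and "sweep n (shift_vec x) (shift_lab H) (shift_lab H') i0 j0"
  shows "x \<in> dual_code n (code_ker n C' H')"
proof -
  interpret sweep n "shift_vec x" "shift_lab H" "shift_lab H'" i0 j0 by fact
  define F where "F c = sweep_sol (int (fst c) - d) (int (snd c) - d)" for c
  have F: "F (tor_pt n i j) = sweep_sol (i - d) (j - d)" for i j
    unfolding F_def using two_le_n by (auto simp: tor_pt_def mod_diff_left_eq intro!: sweep_sol_cong)
  have "x v = (\<Sum>c\<in>C'. F c * H' c v)" if v: "v \<in> tor_V n" for v
  proof -
    obtain p q where pq: "v = (p, q)" "p < 2 * n" "q < 2 * n" "even (p + q)"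
      using v by (auto simp: tor_V_def)
    define i j where "i = int p - d" and "j = int q - d"
    have v_eq: "v = tor_pt n (i + d) (j + d)" and ij: "even (i + j)"
      using pq by (simp_all add: i_def j_def)
    have "(\<Sum>c\<in>C'. F c * H' c v) = (\<Sum>c\<in>C' \<inter> tor_nbrs n (i + d) (j + d). F c * H' c v)"
      unfolding v_eq by (rule labeling_variable_sum[OF lab' C'_grid C'_finite]) (use ij in simp)
    also have "\<dots> = shift_vec x i j"
    proof (cases "even i")
      case True
      hence "C' \<inter> tor_nbrs n (i + d) (j + d) = {tor_pt n (i + d) (j + d - 1), tor_pt n (i + d) (j + d + 1)}"
        using ij by (auto simp: tor_nbrs_def C'_iff)
      moreover have "tor_pt n (i + d) (j + d - 1) \<noteq> tor_pt n (i + d) (j + d + 1)"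
        using tor_nbrs_distinct by metis
      ultimately show ?thesis
        using sweep_sol_even[OF True, of j] True ij
        by (simp add: F shift_lab_def shift_vec_def v_eq algebra_simps)
    next
      case False
      hence "C' \<inter> tor_nbrs n (i + d) (j + d) = {tor_pt n (i + d - 1) (j + d), tor_pt n (i + d + 1) (j + d)}"
        using ij by (auto simp: tor_nbrs_def C'_iff)
      moreover have "tor_pt n (i + d - 1) (j + d) \<noteq> tor_pt n (i + d + 1) (j + d)"
        using tor_nbrs_distinct by metis
      ultimately show ?thesis
        using sweep_sol_odd[OF False, of j] False ij
        by (simp add: F shift_lab_def shift_vec_def v_eq algebra_simps)
    qed
    finally show ?thesis by (simp add: shift_vec_def v_eq)
  qed
  thus ?thesis by (intro in_dual_code_if_check_combination x C'_finite)
qed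

lemma low_weight_codeword_in_dual:
  assumes x: "x \<in> code_ker n C H" and w: "hweight n x < n"
  shows "x \<in> dual_code n (code_ker n C' H')"
proof -
  obtain a where a: "even (a - d)" "\<And>b. even (a + b) \<Longrightarrow> x (tor_pt n a b) = 0"
    using exists_zero_column[OF w, of d] by blast
  obtain b where b: "even (b - (d + 1))" "\<And>a. even (a + b) \<Longrightarrow> x (tor_pt n a b) = 0"
    using exists_zero_row[OF w, of "d + 1"] by blast
  have "odd (b - d)" using b(1) by simp
  from sweep_shifted_codeword[OF x a this b(2)] show ?thesis
    using x by (intro in_dual_code_if_sweep) (simp_all add: code_ker_def)
qed

end

section \<open>Balancing weights along cycles\<close>

lemma periodic_recurrence_solution:
  fixes \<alpha> \<beta> :: "int \<Rightarrow> 'a::field" and n :: nat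
  assumes n: "n \<ge> 1"
    and nz: "\<And>k. \<alpha> k \<noteq> 0" "\<And>k. \<beta> k \<noteq> 0"
    and \<alpha>_mod: "\<And>k. \<alpha> k = \<alpha> (k mod int n)" and \<beta>_mod: "\<And>k. \<beta> k = \<beta> (k mod int n)"
    and prod_one: "(\<Prod>t<n. \<beta> (int t) * inverse (\<alpha> (int t))) = 1"
  shows "\<exists>u. (\<forall>k. u k \<noteq> 0) \<and> (\<forall>k. u k = u (k mod int n)) \<and> (\<forall>k. \<alpha> k * u k = \<beta> k * u (k + 1))"
proof -
  define u0 where "u0 m = (\<Prod>t<m. \<alpha> (int t) / \<beta> (int t))" for m
  define u where "u k = u0 (nat (k mod int n))" for k
  have u0_Suc: "u0 (Suc m) = u0 m * (\<alpha> (int m) / \<beta> (int m))" for m by (simp add: u0_def)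
  have u0_n: "u0 n = 1"
  proof -
    have "u0 n = inverse (\<Prod>t<n. \<beta> (int t) * inverse (\<alpha> (int t)))"
      unfolding u0_def prod_inversef[symmetric] by (rule prod.cong) (simp_all add: field_simps)
    thus ?thesis using prod_one by simp
  qed
  have "\<alpha> k * u k = \<beta> k * u (k + 1)" for k
  proof -
    define m where "m = nat (k mod int n)"
    have mk: "int m = k mod int n" and mn: "m < n" using n by (simp_all add: m_def nat_less_iff)
    hence k1: "(k + 1) mod int n = (int m + 1) mod int n" by (simp add: mod_add_left_eq)
    have "\<alpha> k = \<alpha> (int m)" "\<beta> k = \<beta> (int m)" "u k = u0 m"
      using \<alpha>_mod[of k] \<beta>_mod[of k] mk by (simp_all add: u_def m_def)
    moreover have "u (k + 1) = u0 (Suc m)"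
    proof (cases "Suc m < n")
      case True thus ?thesis using k1 by (simp add: u_def nat_add_distrib)
    next
      case False
      hence "Suc m = n" using mn by simp
      moreover from this have "(k + 1) mod int n = 0" using k1 by (metis mod_self of_nat_Suc add.commute)
      ultimately show ?thesis using u0_n by (simp add: u_def u0_def)
    qed
    ultimately show ?thesis using nz u0_Suc[of m] by (simp add: field_simps)
  qed
  moreover have "u k \<noteq> 0" "u k = u (k mod int n)" for k using nz by (simp_all add: u_def u0_def)
  ultimately show ?thesis by blast
qed

context torus
begin

lemma line_is_cycle:
  fixes Cf Vf :: "int \<Rightarrow> nat \<times> nat"
  assumes Vf_mod: "\<And>k. Vf k = Vf (k mod int n)"
    and Cf_inj: "\<And>a b. a < n \<Longrightarrow> b < n \<Longrightarrow> Cf (int a) = Cf (int b) \<Longrightarrow> a = b"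
    and Vf_inj: "\<And>a b. a < n \<Longrightarrow> b < n \<Longrightarrow> Vf (int a) = Vf (int b) \<Longrightarrow> a = b"
    and Vf_V: "\<And>k. Vf k \<in> tor_V n" and Cf_C: "\<And>k. Cf k \<in> C"
    and adj: "\<And>k. tor_adj n (Cf k) (Vf k) \<and> tor_adj n (Cf k) (Vf (k + 1))"
  shows "is_cycle n C (map (Vf \<circ> int) [0..<n]) (map (Cf \<circ> int) [0..<n])"
  unfolding is_cycle_def
proof (intro conjI allI impI)
  show "distinct (map (Vf \<circ> int) [0..<n])" "distinct (map (Cf \<circ> int) [0..<n])"
    using Cf_inj Vf_inj by (auto simp: distinct_map inj_on_def)
  fix t assume "t < length (map (Vf \<circ> int) [0..<n])"
  hence t: "t < n" by simp
  have "Vf (int ((t + 1) mod n)) = Vf (int t + 1)" using Vf_mod[of "int t + 1"] by (simp add: zmod_int ac_simps)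
  thus "tor_adj n (map (Cf \<circ> int) [0..<n] ! t) (map (Vf \<circ> int) [0..<n] ! t)"
    "tor_adj n (map (Cf \<circ> int) [0..<n] ! t)
       (map (Vf \<circ> int) [0..<n] ! ((t + 1) mod length (map (Vf \<circ> int) [0..<n])))"
    using adj[of "int t"] t by simp_all
qed (use two_le_n Vf_V Cf_C in auto)

end

section \<open>Vectors supported on a column or a row\<close>

definition col_vec :: "nat \<Rightarrow> nat \<Rightarrow> (int \<Rightarrow> 'a) \<Rightarrow> nat \<times> nat \<Rightarrow> 'a::zero" where
  "col_vec n a g v = (if v \<in> tor_V n \<and> fst v = a then g (int (snd v) div 2) else 0)"

definition row_vec :: "nat \<Rightarrow> nat \<Rightarrow> (int \<Rightarrow> 'a) \<Rightarrow> nat \<times> nat \<Rightarrow> 'a::zero" where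
  "row_vec n b g = col_vec n b g \<circ> prod.swap"

lemma col_vec_in_vecs: "col_vec n a g \<in> vecs n"
  by (simp add: vecs_def col_vec_def)

lemma row_vec_in_vecs: "row_vec n b g \<in> vecs n"
  unfolding vecs_def row_vec_def col_vec_def by (auto simp: tor_V_def add.commute)

lemma hweight_col_vec:
  assumes "a < 2 * n" "\<And>k. g k \<noteq> 0"
  shows "hweight n (col_vec n a g) = n"
proof -
  have "{v \<in> tor_V n. col_vec n a g v \<noteq> 0} = (\<lambda>k. (a, 2 * k + a mod 2)) ` {..<n}"
  proof (rule Set.set_eqI, rule iffI)
    fix v assume "v \<in> {v \<in> tor_V n. col_vec n a g v \<noteq> 0}"
    then obtain b where "v = (a, b)" "b < 2 * n" "even (a + b)"
      by (cases v) (auto simp: col_vec_def tor_V_def split: if_splits)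
    moreover from this have "b = 2 * (b div 2) + a mod 2" "b div 2 < n" by presburger+
    ultimately show "v \<in> (\<lambda>k. (a, 2 * k + a mod 2)) ` {..<n}" by blast
  qed (use assms in \<open>auto simp: col_vec_def tor_V_def\<close>)
  thus ?thesis by (simp add: hweight_def card_image inj_on_def)
qed

lemma hweight_row_vec: "b < 2 * n \<Longrightarrow> (\<And>k. g k \<noteq> 0) \<Longrightarrow> hweight n (row_vec n b g) = n"
  by (simp add: row_vec_def hweight_swap hweight_col_vec)

lemma inner_col_vec_row_vec:
  fixes g h :: "int \<Rightarrow> 'a::semiring_0"
  assumes "a < 2 * n" "b < 2 * n" "even (a + b)"
  shows "(\<Sum>v\<in>tor_V n. row_vec n b h v * col_vec n a g v) = h (int a div 2) * g (int b div 2)"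
proof -
  have "(\<Sum>v\<in>tor_V n. row_vec n b h v * col_vec n a g v) = (\<Sum>v\<in>{(a, b)}. row_vec n b h v * col_vec n a g v)"
    by (rule sum.mono_neutral_right[OF finite_tor_V])
      (use assms in \<open>auto simp: tor_V_def row_vec_def col_vec_def\<close>)
  thus ?thesis using assms by (simp add: tor_V_def row_vec_def col_vec_def add.commute)
qed

context torus
begin

lemma periodic_div2_mod:
  assumes "\<And>k. g k = g (k mod int n)"
  shows "g (j mod (2 * int n) div 2) = g (j div 2)"
proof -
  have "j mod (2 * int n) div 2 = j div 2 + int n * - (j div (2 * int n))"
    by (simp add: minus_div_mult_eq_mod[symmetric] algebra_simps)
  hence "(j mod (2 * int n) div 2) mod int n = (j div 2) mod int n" by (simp add: mod_eq_dvd_iff)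
  thus ?thesis by (metis assms)
qed

lemma col_vec_tor_pt:
  assumes "\<And>k. g k = g (k mod int n)" "a < 2 * n" "even (i + j)"
  shows "col_vec n a g (tor_pt n i j) = (if i mod (2 * int n) = int a then g (j div 2) else 0)"
proof -
  have "tor_pt n i j \<in> tor_V n" using assms(3) by (simp add: tor_pt_in_V_iff)
  moreover have "fst (tor_pt n i j) = a \<longleftrightarrow> i mod (2 * int n) = int a"
    using two_le_n by (auto simp: tor_pt_def)
  moreover have "int (snd (tor_pt n i j)) = j mod (2 * int n)" using two_le_n by (simp add: tor_pt_def)
  ultimately show ?thesis
    using periodic_div2_mod[where g=g, OF assms(1)] by (simp add: col_vec_def)
qed

lemma row_vec_tor_pt:
  assumes "\<And>k. g k = g (k mod int n)" "b < 2 * n" "even (i + j)"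
  shows "row_vec n b g (tor_pt n i j) = (if j mod (2 * int n) = int b then g (i div 2) else 0)"
proof -
  have "prod.swap (tor_pt n i j) = tor_pt n j i" by (simp add: tor_pt_def)
  thus ?thesis using col_vec_tor_pt[where g=g, OF assms(1,2), of j i] assms(3) by (simp add: row_vec_def add.commute)
qed

end

section \<open>Minimum weights of the toric codes\<close>

lemma char2_recurrence_cancel:
  fixes pa qa pb qb r y za zb ta tb :: "'a::field"
  assumes char2: "(1::'a) + 1 = 0" and nz: "qa \<noteq> 0" "r \<noteq> 0" "ta \<noteq> 0" "tb \<noteq> 0"
    and o1: "pa * za + qa * y = 0" and o2: "pb * zb + qb * y = 0" and rec: "qb * ta = r * tb"
  shows "za * (pa / (qa * ta)) + zb * (pb / (r * tb)) = 0"
proof -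
  note eq = add_eq_zero_iff_eq_char2[OF char2]
  have "za * (pa / (qa * ta)) = y / ta" using o1 nz by (simp add: eq field_simps)
  moreover have "zb * (pb / (r * tb)) = y / ta"
  proof -
    have "zb * (pb / (r * tb)) = qb * y / (r * tb)" using o2 by (simp add: eq field_simps)
    also have "\<dots> = y / ta" using rec nz by (metis mult.commute nonzero_mult_divide_mult_cancel_left
        mult_eq_0_iff)
    finally show ?thesis .
  qed
  ultimately show ?thesis using add_self_eq_zero_char2[OF char2] by simp
qed

locale toric_css = torus +
  fixes HX HZ :: "nat \<times> nat \<Rightarrow> nat \<times> nat \<Rightarrow> 'a::field"
  assumes char2: "(1::'a) + 1 = 0"
    and labX: "is_labeling n (tor_CX n) HX" and labZ: "is_labeling n (tor_CZ n) HZ"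
    and orthogonal: "\<And>c c'. c \<in> tor_CX n \<Longrightarrow> c' \<in> tor_CZ n \<Longrightarrow> (\<Sum>v\<in>tor_V n. HX c v * HZ c' v) = 0"
begin

lemma n_le_hweight_X:
  assumes "x \<in> code_ker n (tor_CX n) HX" "x \<notin> dual_code n (code_ker n (tor_CZ n) HZ)"
  shows "n \<le> hweight n x"
proof -
  interpret css_pair n "tor_CX n" "tor_CZ n" HX HZ 0
    by unfold_locales (use char2 labX labZ orthogonal tor_CZ_grid finite_tor_CZ in
        \<open>simp_all add: tor_pt_in_CX_iff tor_pt_in_CZ_iff\<close>)
  show ?thesis using low_weight_codeword_in_dual assms by fastforce
qed

lemma n_le_hweight_Z:
  assumes "x \<in> code_ker n (tor_CZ n) HZ" "x \<notin> dual_code n (code_ker n (tor_CX n) HX)"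
  shows "n \<le> hweight n x"
proof -
  have "(\<Sum>v\<in>tor_V n. HZ c v * HX c' v) = 0" if "c \<in> tor_CZ n" "c' \<in> tor_CX n" for c c'
    using orthogonal[OF that(2,1)] by (simp add: mult.commute)
  then interpret css_pair n "tor_CZ n" "tor_CX n" HZ HX 1
    by unfold_locales (use char2 labX labZ tor_CX_grid finite_tor_CX in
        \<open>simp_all add: tor_pt_in_CX_iff tor_pt_in_CZ_iff\<close>)
  show ?thesis using low_weight_codeword_in_dual assms by fastforce
qed

end

locale flat_toric_css = toric_css +
  assumes cycle_product_one: "\<And>vs cs. is_cycle n (tor_CX n) vs cs \<Longrightarrow> cycle_product HX vs cs = 1"
begin

definition balances :: "(int \<Rightarrow> nat \<times> nat) \<Rightarrow> (int \<Rightarrow> nat \<times> nat) \<Rightarrow> (int \<Rightarrow> 'a) \<Rightarrow> bool" where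
  "balances Cf Vf t \<longleftrightarrow> (\<forall>k. t k \<noteq> 0) \<and> (\<forall>k. t k = t (k mod int n)) \<and>
     (\<forall>k. HX (Cf k) (Vf k) * t k = HX (Cf k) (Vf (k + 1)) * t (k + 1))"

lemma exists_balancing_weights:
  fixes Cf Vf :: "int \<Rightarrow> nat \<times> nat"
  assumes Cf_mod: "\<And>k. Cf k = Cf (k mod int n)" and Vf_mod: "\<And>k. Vf k = Vf (k mod int n)"
    and Cf_inj: "\<And>a b. a < n \<Longrightarrow> b < n \<Longrightarrow> Cf (int a) = Cf (int b) \<Longrightarrow> a = b"
    and Vf_inj: "\<And>a b. a < n \<Longrightarrow> b < n \<Longrightarrow> Vf (int a) = Vf (int b) \<Longrightarrow> a = b"
    and Vf_V: "\<And>k. Vf k \<in> tor_V n" and Cf_CX: "\<And>k. Cf k \<in> tor_CX n"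
    and adj: "\<And>k. tor_adj n (Cf k) (Vf k) \<and> tor_adj n (Cf k) (Vf (k + 1))"
  shows "\<exists>t. balances Cf Vf t"
  unfolding balances_def
proof (rule periodic_recurrence_solution)
  show "1 \<le> n" using two_le_n by simp
  show "HX (Cf k) (Vf k) \<noteq> 0" "HX (Cf k) (Vf (k + 1)) \<noteq> 0" for k
    using is_labelingD[OF labX Cf_CX] Vf_V adj by blast+
  show "HX (Cf k) (Vf k) = HX (Cf (k mod int n)) (Vf (k mod int n))" for k
    using Cf_mod Vf_mod by metis
  show "HX (Cf k) (Vf (k + 1)) = HX (Cf (k mod int n)) (Vf (k mod int n + 1))" for k
    using Cf_mod Vf_mod by (metis mod_add_left_eq)
  have "cycle_product HX (map (Vf \<circ> int) [0..<n]) (map (Cf \<circ> int) [0..<n]) = 1"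
    by (intro cycle_product_one line_is_cycle assms)
  moreover have "Vf (int ((t + 1) mod n)) = Vf (int t + 1)" for t
    using Vf_mod[of "int t + 1"] by (simp add: zmod_int ac_simps)
  ultimately show "(\<Prod>t<n. HX (Cf (int t)) (Vf (int t + 1)) * inverse (HX (Cf (int t)) (Vf (int t)))) = 1"
    by (simp add: cycle_product_def atLeast0LessThan)
qed

lemma exists_balancing_weights_column_1:
  "\<exists>t. balances (\<lambda>k. tor_pt n 1 (2 + 2 * k)) (\<lambda>k. tor_pt n 1 (1 + 2 * k)) t"
proof (rule exists_balancing_weights)
  show "tor_pt n 1 (2 + 2 * k) = tor_pt n 1 (2 + 2 * (k mod int n))"
    "tor_pt n 1 (1 + 2 * k) = tor_pt n 1 (1 + 2 * (k mod int n))" for k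
    by (rule tor_pt_snd_step_mod)+
  show "a = b" if "a < n" "b < n" "tor_pt n 1 (2 + 2 * int a) = tor_pt n 1 (2 + 2 * int b)" for a b
    using tor_pt_snd_step_inj that by blast
  show "a = b" if "a < n" "b < n" "tor_pt n 1 (1 + 2 * int a) = tor_pt n 1 (1 + 2 * int b)" for a b
    using tor_pt_snd_step_inj that by blast
qed (auto simp: tor_pt_in_V_iff tor_pt_in_CX_iff tor_adj_tor_pt_iff tor_nbrs_def algebra_simps)

lemma exists_balancing_weights_row_0:
  "\<exists>s. balances (\<lambda>k. tor_pt n (1 + 2 * k) 0) (\<lambda>k. tor_pt n (2 * k) 0) s"
proof (rule exists_balancing_weights)
  show "tor_pt n (1 + 2 * k) 0 = tor_pt n (1 + 2 * (k mod int n)) 0"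
    "tor_pt n (2 * k) 0 = tor_pt n (2 * (k mod int n)) 0" for k
    using tor_pt_fst_step_mod[of 1 k 0] tor_pt_fst_step_mod[of 0 k 0] by simp_all
  show "a = b" if "a < n" "b < n" "tor_pt n (1 + 2 * int a) 0 = tor_pt n (1 + 2 * int b) 0" for a b
    using tor_pt_fst_step_inj that by blast
  show "a = b" if "a < n" "b < n" "tor_pt n (2 * int a) 0 = tor_pt n (2 * int b) 0" for a b
    using tor_pt_fst_step_inj[of 0 a 0 b 0] that by simp
qed (auto simp: tor_pt_in_V_iff tor_pt_in_CX_iff tor_adj_tor_pt_iff tor_nbrs_def algebra_simps)

lemma col_vec_in_code_X:
  assumes "balances (\<lambda>k. tor_pt n 1 (2 + 2 * k)) (\<lambda>k. tor_pt n 1 (1 + 2 * k)) t"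
  shows "col_vec n 1 t \<in> code_ker n (tor_CX n) HX"
  unfolding code_ker_def
proof (intro CollectI conjI ballI col_vec_in_vecs)
  have t_mod: "\<And>k. t k = t (k mod int n)"
    and t_rec: "\<And>k. HX (tor_pt n 1 (2 + 2 * k)) (tor_pt n 1 (1 + 2 * k)) * t k =
      HX (tor_pt n 1 (2 + 2 * k)) (tor_pt n 1 (1 + 2 * (k + 1))) * t (k + 1)"
    using assms by (simp_all add: balances_def)
  fix c assume c: "c \<in> tor_CX n"
  then obtain i j where ij: "c = tor_pt n i j" "0 \<le> i" "i < 2 * int n"
    by (rule tor_pt_canonical[OF _ tor_CX_grid]) blast
  have par: "odd i" "even j" "odd (i + j)" using c ij(1) by (simp_all add: tor_pt_in_CX_iff)
  have x: "col_vec n 1 t (tor_pt n i' j') = (if i' mod (2 * int n) = 1 then t (j' div 2) else 0)"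
    if "even (i' + j')" for i' j'
    using col_vec_tor_pt[where g=t, OF t_mod _ that] two_le_n by simp
  have "(\<Sum>v\<in>tor_V n. HX c v * col_vec n 1 t v) =
      HX c (tor_pt n i (j + 1)) * col_vec n 1 t (tor_pt n i (j + 1)) +
      HX c (tor_pt n i (j - 1)) * col_vec n 1 t (tor_pt n i (j - 1))"
    unfolding ij(1) labeling_check_sum[OF labX c[unfolded ij(1)] par(3)]
    using par x even_mod_double_iff[of "i + 1" n] even_mod_double_iff[of "i - 1" n] by auto
  also have "\<dots> = 0"
  proof (cases "i = 1")
    case True
    define m where "m = j div 2"
    have j: "j = 2 * m" using par(2) by (simp add: m_def)
    have "HX c (tor_pt n i (j - 1)) * t (m - 1) = HX c (tor_pt n i (j + 1)) * t m"
      using t_rec[of "m - 1"] by (simp add: ij(1) True j algebra_simps)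
    moreover have "(2 * m - 1) div 2 = m - 1" "(2 * m + 1) div 2 = m" by presburger+
    moreover have "1 mod (2 * int n) = 1" using two_le_n by simp
    ultimately show ?thesis using True par x[of 1] char2[unfolded one_add_one] by (simp add: j)
  qed (use par ij x in simp)
  finally show "(\<Sum>v\<in>tor_V n. HX c v * col_vec n 1 t v) = 0" .
qed

text \<open>
  Orthogonality to the X-checks of row 0 relates the two labels of each Z-check on row 1 through
  the labels of the variables on row 0; the balancing weights s of row 0 make the resulting
  contributions cancel in pairs.
\<close>

definition row_coeff :: "(int \<Rightarrow> 'a) \<Rightarrow> int \<Rightarrow> 'a" where
  "row_coeff s k = HX (tor_pt n (1 + 2 * k) 0) (tor_pt n (1 + 2 * k) 1) /
     (HX (tor_pt n (1 + 2 * k) 0) (tor_pt n (2 * (k + 1)) 0) * s (k + 1))"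

lemma row_coeff_check:
  assumes "balances (\<lambda>k. tor_pt n (1 + 2 * k) 0) (\<lambda>k. tor_pt n (2 * k) 0) s"
  shows "HZ (tor_pt n (2 * m) 1) (tor_pt n (2 * m - 1) 1) * row_coeff s (m - 1) +
    HZ (tor_pt n (2 * m) 1) (tor_pt n (2 * m + 1) 1) * row_coeff s m = 0"
proof -
  have s_nz: "\<And>k. s k \<noteq> 0" using assms by (simp add: balances_def)
  let ?c = "tor_pt n (2 * m) 1"
  have CX: "tor_pt n (2 * m - 1) 0 \<in> tor_CX n" "tor_pt n (2 * m + 1) 0 \<in> tor_CX n" and CZ: "?c \<in> tor_CZ n"
    by (simp_all add: tor_pt_in_CX_iff tor_pt_in_CZ_iff)
  have o1: "HX (tor_pt n (2 * m - 1) 0) (tor_pt n (2 * m - 1) 1) * HZ ?c (tor_pt n (2 * m - 1) 1) +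
      HX (tor_pt n (2 * m - 1) 0) (tor_pt n (2 * m) 0) * HZ ?c (tor_pt n (2 * m) 0) = 0"
    using diagonal_checks_orthogonal[OF labX labZ CX(1), of 1 1] CZ orthogonal[OF CX(1) CZ]
    by (simp add: add.commute)
  have o2: "HX (tor_pt n (2 * m + 1) 0) (tor_pt n (2 * m + 1) 1) * HZ ?c (tor_pt n (2 * m + 1) 1) +
      HX (tor_pt n (2 * m + 1) 0) (tor_pt n (2 * m) 0) * HZ ?c (tor_pt n (2 * m) 0) = 0"
    using diagonal_checks_orthogonal[OF labX labZ CX(2), of "-1" 1] CZ orthogonal[OF CX(2) CZ]
    by (simp add: add.commute)
  have nz: "HX (tor_pt n (2 * m - 1) 0) (tor_pt n (2 * m) 0) \<noteq> 0"
    "HX (tor_pt n (2 * m + 1) 0) (tor_pt n (2 * m + 2) 0) \<noteq> 0"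
    using labeling_nonzero[OF labX CX(1)] labeling_nonzero[OF labX CX(2)]
    by (simp_all add: tor_nbrs_def ac_simps)
  have rec: "HX (tor_pt n (2 * m + 1) 0) (tor_pt n (2 * m) 0) * s m =
      HX (tor_pt n (2 * m + 1) 0) (tor_pt n (2 * m + 2) 0) * s (m + 1)"
    using assms by (simp add: balances_def add.commute)
  have "1 + 2 * (m - 1) = 2 * m - 1" "m - 1 + 1 = m" "1 + 2 * m = 2 * m + 1" "2 * (m + 1) = 2 * m + 2"
    by simp_all
  thus ?thesis
    unfolding row_coeff_def by (simp only:) (rule char2_recurrence_cancel[OF char2 nz s_nz s_nz o1 o2 rec])
qed

lemma row_vec_in_code_Z:
  assumes s: "balances (\<lambda>k. tor_pt n (1 + 2 * k) 0) (\<lambda>k. tor_pt n (2 * k) 0) s"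
  shows "row_vec n 1 (row_coeff s) \<in> code_ker n (tor_CZ n) HZ"
  unfolding code_ker_def
proof (intro CollectI conjI ballI row_vec_in_vecs)
  have coeff_mod: "row_coeff s k = row_coeff s (k mod int n)" for k
  proof -
    have "s (k + 1) = s (k mod int n + 1)" using s by (metis balances_def mod_add_left_eq)
    moreover have "2 * (k + 1) = 2 + 2 * k" "2 * (k mod int n + 1) = 2 + 2 * (k mod int n)" by simp_all
    ultimately show ?thesis
      unfolding row_coeff_def by (metis tor_pt_fst_step_mod)
  qed
  fix c assume c: "c \<in> tor_CZ n"
  then obtain i j where ij: "c = tor_pt n i j" "0 \<le> j" "j < 2 * int n"
    by (rule tor_pt_canonical[OF _ tor_CZ_grid]) blast
  have par: "even i" "odd j" "odd (i + j)" using c ij(1) by (simp_all add: tor_pt_in_CZ_iff)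
  have z: "row_vec n 1 (row_coeff s) (tor_pt n i' j') =
      (if j' mod (2 * int n) = 1 then row_coeff s (i' div 2) else 0)" if "even (i' + j')" for i' j'
    using row_vec_tor_pt[where g="row_coeff s", OF coeff_mod _ that] two_le_n by simp
  have "(\<Sum>v\<in>tor_V n. HZ c v * row_vec n 1 (row_coeff s) v) =
      HZ c (tor_pt n (i + 1) j) * row_vec n 1 (row_coeff s) (tor_pt n (i + 1) j) +
      HZ c (tor_pt n (i - 1) j) * row_vec n 1 (row_coeff s) (tor_pt n (i - 1) j)"
    unfolding ij(1) labeling_check_sum[OF labZ c[unfolded ij(1)] par(3)]
    using par z even_mod_double_iff[of "j + 1" n] even_mod_double_iff[of "j - 1" n] by auto
  also have "\<dots> = 0"
  proof (cases "j = 1")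
    case True
    define m where "m = i div 2"
    have i: "i = 2 * m" using par(1) by (simp add: m_def)
    have "(2 * m - 1) div 2 = m - 1" "(2 * m + 1) div 2 = m" by presburger+
    moreover have "1 mod (2 * int n) = 1" using two_le_n by simp
    ultimately show ?thesis
      using row_coeff_check[OF s, of m] True z ij(1) by (simp add: i add.commute)
  qed (use par ij z in simp)
  finally show "(\<Sum>v\<in>tor_V n. HZ c v * row_vec n 1 (row_coeff s) v) = 0" .
qed

lemma exists_weight_n_codeword_pair:
  obtains x z where "x \<in> code_ker n (tor_CX n) HX" "z \<in> code_ker n (tor_CZ n) HZ"
    "hweight n x = n" "hweight n z = n" "(\<Sum>v\<in>tor_V n. z v * x v) \<noteq> 0"
proof -
  obtain t where t: "balances (\<lambda>k. tor_pt n 1 (2 + 2 * k)) (\<lambda>k. tor_pt n 1 (1 + 2 * k)) t"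
    using exists_balancing_weights_column_1 by blast
  obtain s where s: "balances (\<lambda>k. tor_pt n (1 + 2 * k) 0) (\<lambda>k. tor_pt n (2 * k) 0) s"
    using exists_balancing_weights_row_0 by blast
  have t_nz: "t k \<noteq> 0" for k using t by (simp add: balances_def)
  have coeff_nz: "row_coeff s k \<noteq> 0" for k
  proof -
    have "tor_pt n (1 + 2 * k) 0 \<in> tor_CX n" by (simp add: tor_pt_in_CX_iff)
    from labeling_nonzero[OF labX this] show ?thesis
      using s by (simp add: balances_def row_coeff_def tor_nbrs_def algebra_simps)
  qed
  have one: "1 < 2 * n" using two_le_n by simp
  show ?thesis
  proof (rule that[of "col_vec n 1 t" "row_vec n 1 (row_coeff s)"])
    show "col_vec n 1 t \<in> code_ker n (tor_CX n) HX" by (rule col_vec_in_code_X[OF t])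
    show "row_vec n 1 (row_coeff s) \<in> code_ker n (tor_CZ n) HZ" by (rule row_vec_in_code_Z[OF s])
    show "hweight n (col_vec n 1 t) = n" by (rule hweight_col_vec[OF one t_nz])
    show "hweight n (row_vec n 1 (row_coeff s)) = n" by (rule hweight_row_vec[OF one coeff_nz])
    show "(\<Sum>v\<in>tor_V n. row_vec n 1 (row_coeff s) v * col_vec n 1 t v) \<noteq> 0"
      using inner_col_vec_row_vec[OF one one, where g=t and h="row_coeff s"] coeff_nz t_nz by simp
  qed
qed

lemma min_weights_eq_n:
  "Min (hweight n ` (code_ker n (tor_CX n) HX - dual_code n (code_ker n (tor_CZ n) HZ))) = n \<and>
   Min (hweight n ` (code_ker n (tor_CZ n) HZ - dual_code n (code_ker n (tor_CX n) HX))) = n"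
proof -
  obtain x z where xz: "x \<in> code_ker n (tor_CX n) HX" "z \<in> code_ker n (tor_CZ n) HZ"
    "hweight n x = n" "hweight n z = n" "(\<Sum>v\<in>tor_V n. z v * x v) \<noteq> 0"
    by (rule exists_weight_n_codeword_pair)
  have "x \<notin> dual_code n (code_ker n (tor_CZ n) HZ)" "z \<notin> dual_code n (code_ker n (tor_CX n) HX)"
    using xz by (auto simp: dual_code_def mult.commute)
  moreover have "finite (hweight n ` S)" for S :: "(nat \<times> nat \<Rightarrow> 'a) set"
    by (rule finite_subset[of _ "{..card (tor_V n)}"])
      (auto simp: hweight_def intro!: card_mono finite_tor_V)
  ultimately show ?thesis
    using xz n_le_hweight_X n_le_hweight_Z by (intro conjI Min_eqI) force+
qed

end

theorem lemma5:
  fixes HX HZ :: "nat \<times> nat \<Rightarrow> nat \<times> nat \<Rightarrow> 'a::{field, finite}"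
    and n m :: nat
  assumes "n \<ge> 2"
    and "m \<ge> 1"
    and "card (UNIV :: 'a set) = 2 ^ m"
    and "is_labeling n (tor_CX n) HX"
    and "is_labeling n (tor_CZ n) HZ"
    and "dual_code n (code_ker n (tor_CZ n) HZ) \<subseteq> code_ker n (tor_CX n) HX"
    and "\<And>vs cs. is_cycle n (tor_CX n) vs cs \<Longrightarrow> cycle_product HX vs cs = 1"
  shows "Min (hweight n ` (code_ker n (tor_CX n) HX - dual_code n (code_ker n (tor_CZ n) HZ))) = n \<and>
         Min (hweight n ` (code_ker n (tor_CZ n) HZ - dual_code n (code_ker n (tor_CX n) HX))) = n"
proof -
  interpret flat_toric_css n HX HZ
    using assms one_add_one_eq_zero_if_card_eq_power_two[OF assms(3,2)]
      labelings_orthogonal_if_dual_subset[OF assms(6)]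
    by unfold_locales auto
  show ?thesis by (rule min_weights_eq_n)
qed

end
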